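(* Let $N\ge2$, $\Omega=\mathbb{R}^{N-1}\times(0,\infty)$, $(\phi,\psi)\in BC(\Omega)\times L^\infty(\partial\Omega)$, and fix $\delta>0$, $k>0$. For $\epsilon>0$ and $\kappa\in\{k,0\}$ let $u^\epsilon_\kappa$ be the solution defined in the context. Then for every compact $K\subset\Omega$ and $T>0$, \[\lim_{\epsilon\to\infty}\sup_{(x,t)\in K\times(0,T)}|u^\epsilon_k(x,t)-\phi(x)|=0,\qquad\lim_{\epsilon\to\infty}\sup_{(x,t)\in K\times(0,T)}|u^\epsilon_0(x,t)-\phi(x)|=0.\]
   Context: $x=(x',x_N)$, $\partial\Omega\cong\mathbb{R}^{N-1}$ with surface measure $d\sigma$. $\Gamma_d(x,t)=(4\pi t)^{-d/2}e^{-|x|^2/(4t)}$, $\partial_\xi\Gamma_1$ the spatial derivative of $\Gamma_1$, $y^*=(y',-y_N)$, $G_0(x,y,s)=\Gamma_N(x-y,s)-\Gamma_N(x-y^*,s)$. For $\kappa\ge0$: $H(x,y,t)=-2\int_0^t\Gamma_{N-1}(x'-y',\frac{t-\tau}\epsilon+\frac\kappa\delta\tau)\partial_\xi\Gamma_1(x_N+y_N+\frac\tau\delta,\frac{t-\tau}\epsilon)d\tau$, $G=G_0(x,y,t/\epsilon)+\delta^{-1}H$, and $u^\epsilon_\kappa(x,t)=\int_\Omega G(x,y,t)\phi(y)dy+\frac\delta\epsilon\int_{\partial\Omega}G(x,y,t)\psi(y)d\sigma(y)$ is the solution of $\epsilon\partial_tu=\Delta u$ in $\Omega$, $\delta\partial_tu-\kappa\Delta'u-\partial_{x_N}u=0$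 on $\partial\Omega$ ($\Delta'$ the Laplacian in $x'$), with initial data $\phi$ in $\Omega$ and $\psi$ on $\partial\Omega$. *)

theory Defs
  imports "HOL-Analysis.Analysis"
begin

text \<open>Points of R^N are pairs (x', x_N) with x' :: real^'n, so N - 1 = CARD('n) \<ge> 1.\<close>

definition half_space :: "((real^'n) \<times> real) set" where
  "half_space = UNIV \<times> {0<..}"

definition heat :: "real \<Rightarrow> real \<Rightarrow> real \<Rightarrow> real" where
  "heat d r t = (4 * pi * t) powr (- d / 2) * exp (- (r\<^sup>2) / (4 * t))"

definition dheat1 :: "real \<Rightarrow> real \<Rightarrow> real" where
  "dheat1 \<xi> s = deriv (\<lambda>z. heat 1 \<bar>z\<bar> s) \<xi>"

definition refl_pt :: "(real^'n) \<times> real \<Rightarrow> (real^'n) \<times> real" where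
  "refl_pt y = (fst y, - snd y)"

definition G0 :: "(real^'n) \<times> real \<Rightarrow> (real^'n) \<times> real \<Rightarrow> real \<Rightarrow> real" where
  "G0 x y s = heat (real CARD('n) + 1) (norm (x - y)) s
            - heat (real CARD('n) + 1) (norm (x - refl_pt y)) s"

definition Hker :: "real \<Rightarrow> real \<Rightarrow> real \<Rightarrow> (real^'n) \<times> real \<Rightarrow> (real^'n) \<times> real \<Rightarrow> real \<Rightarrow> real" where
  "Hker eps kap del x y t = - 2 * (LBINT \<tau>=0..t.
      heat (real CARD('n)) (norm (fst x - fst y)) ((t - \<tau>) / eps + kap / del * \<tau>)
      * dheat1 (snd x + snd y + \<tau> / del) ((t - \<tau>) / eps))"

definition Gker :: "real \<Rightarrow> real \<Rightarrow> real \<Rightarrow> (real^'n) \<times> real \<Rightarrow> (real^'n) \<times> real \<Rightarrow> real \<Rightarrow> real" where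
  "Gker eps kap del x y t = G0 x y (t / eps) + Hker eps kap del x y t / del"

text \<open>The solution u^eps_kappa; the boundary is identified with R^(N-1) via y' \<mapsto> (y',0).\<close>
definition usol :: "real \<Rightarrow> real \<Rightarrow> real \<Rightarrow> ((real^'n) \<times> real \<Rightarrow> real) \<Rightarrow> (real^'n \<Rightarrow> real)
      \<Rightarrow> (real^'n) \<times> real \<Rightarrow> real \<Rightarrow> real" where
  "usol eps kap del \<phi> \<psi> x t =
     (LINT y : half_space | lborel. Gker eps kap del x y t * \<phi> y)
     + del / eps * (LINT y' | lborel. Gker eps kap del x (y', 0) t * \<psi> y')"

end

(*
  On a compact K inside the half-space we have x_N >= c > 0. Since y* = y on the boundary,
  the solution splits as
    u(x,t) = int_Omega G0(x,y,t/eps) phi(y) dy + (1/del) int_Omega H phi + (1/eps) int_bdry H psi.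
  The first term is an approximate identity at time s = t/eps -> 0: near x one uses the uniform
  continuity of phi, while away from x, and for the reflected Gaussian (which sees x at distance
  at least x_N), the kernel at time s is bounded by e^(-rho^2/(8s)) times the kernel at time 2s.
  In H the factor d_xi Gamma_1 is evaluated at x_N + y_N + tau/del >= c and time (t-tau)/eps <= t/eps,
  so its L^1 norm in y_N (a boundary value of Gamma_1) is O(sqrt(t/eps)/c^2) and its supremum is
  O(sqrt(t/eps)/c^3), while the Gaussian in y' has unit mass for every kappa >= 0. Both H-terms are
  therefore O(eps^(-1/2)), uniformly on K x (0,T).
*)
theory Submission
  imports Defs "HOL-Probability.Distributions" "HOL-Real_Asymp.Real_Asymp"
begin

section \<open>Gaussian kernels\<close>

lemma heat_nonneg: "0 \<le> heat d r s"
  unfolding heat_def by (intro mult_nonneg_nonneg) auto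

lemma heat_abs [simp]: "heat d \<bar>r\<bar> s = heat d r s"
  by (simp add: heat_def)

lemma heat_measurable [measurable]: "(\<lambda>z. heat d (f z) (g z)) \<in> borel_measurable M"
  if [measurable]: "f \<in> borel_measurable M" "g \<in> borel_measurable M"
  unfolding heat_def by measurable

lemma heat_eq_prod_normal_density:
  fixes \<mu> z :: "'a::euclidean_space"
  assumes s: "s > 0"
  shows "heat DIM('a) (norm (z - \<mu>)) s
       = (\<Prod>b\<in>Basis. normal_density (\<mu> \<bullet> b) (sqrt (2 * s)) (z \<bullet> b))"
proof -
  have norm_sq: "(norm (z - \<mu>))\<^sup>2 = (\<Sum>b\<in>Basis. (z \<bullet> b - \<mu> \<bullet> b)\<^sup>2)"
    unfolding power2_norm_eq_inner euclidean_inner[of "z - \<mu>" "z - \<mu>"]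
    by (simp add: inner_diff_left power2_eq_square)
  have "(\<Prod>b\<in>Basis. normal_density (\<mu> \<bullet> b) (sqrt (2 * s)) (z \<bullet> b))
      = (\<Prod>b\<in>Basis. 1 / sqrt (4 * pi * s) * exp (- (z \<bullet> b - \<mu> \<bullet> b)\<^sup>2 / (4 * s)))"
    using s by (intro prod.cong) (auto simp: normal_density_def power2_eq_square)
  also have "\<dots> = (1 / sqrt (4 * pi * s)) ^ DIM('a) * (\<Prod>b\<in>Basis. exp (- (z \<bullet> b - \<mu> \<bullet> b)\<^sup>2 / (4 * s)))"
    unfolding prod.distrib by simp
  also have "(\<Prod>b\<in>Basis. exp (- (z \<bullet> b - \<mu> \<bullet> b)\<^sup>2 / (4 * s))) = exp (- (norm (z - \<mu>))\<^sup>2 / (4 * s))"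
    unfolding norm_sq by (simp add: sum_divide_distrib sum_negf[symmetric] exp_sum)
  also have "(1 / sqrt (4 * pi * s)) ^ DIM('a) = (4 * pi * s) powr (- real DIM('a) / 2)"
  proof -
    have "1 / sqrt (4 * pi * s) = (4 * pi * s) powr (- (1 / 2))"
      using s by (simp add: powr_minus_divide powr_half_sqrt)
    moreover have "4 * pi * s > 0"
      using s by simp
    ultimately show ?thesis
      by (simp only: powr_power) (simp add: field_simps)
  qed
  finally show ?thesis
    by (simp add: heat_def)
qed

lemma nn_integral_heat:
  fixes \<mu> :: "'a::euclidean_space"
  assumes s: "s > 0"
  shows "(\<integral>\<^sup>+z. ennreal (heat DIM('a) (norm (z - \<mu>)) s) \<partial>lborel) = 1"
proof -
  have "(\<integral>\<^sup>+z. ennreal (heat DIM('a) (norm (z - \<mu>)) s) \<partial>lborel)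
      = (\<integral>\<^sup>+z. (\<Prod>b\<in>Basis. ennreal (normal_density (\<mu> \<bullet> b) (sqrt (2 * s)) (z \<bullet> b))) \<partial>lborel)"
    using s by (simp add: heat_eq_prod_normal_density prod_ennreal)
  also have "\<dots> = (\<Prod>b\<in>(Basis::'a set).
      \<integral>\<^sup>+y. ennreal (normal_density (\<mu> \<bullet> b) (sqrt (2 * s)) y) \<partial>lborel)"
    by (rule nn_integral_lborel_prod) auto
  also have "\<dots> = (\<Prod>b\<in>(Basis::'a set). 1)"
    using s by (intro prod.cong refl) (simp add: nn_integral_eq_integral)
  finally show ?thesis
    by simp
qed

lemma integrable_heat:
  fixes \<mu> :: "'a::euclidean_space"
  assumes "s > 0"
  shows "integrable lborel (\<lambda>z. heat DIM('a) (norm (z - \<mu>)) s)"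
  using assms by (intro integrableI_nn_integral_finite[where x = 1]) (auto simp: nn_integral_heat heat_nonneg)

lemma integral_heat:
  fixes \<mu> :: "'a::euclidean_space"
  assumes "s > 0"
  shows "(\<integral>z. heat DIM('a) (norm (z - \<mu>)) s \<partial>lborel) = 1"
  using assms by (subst integral_eq_nn_integral) (auto simp: nn_integral_heat heat_nonneg)

lemma heat_antimono:
  assumes "s > 0" "0 \<le> r1" "r1 \<le> r2"
  shows "heat d r2 s \<le> heat d r1 s"
proof -
  have "r1\<^sup>2 \<le> r2\<^sup>2"
    using assms by (intro power_mono) auto
  then show ?thesis
    using assms unfolding heat_def by (intro mult_left_mono) (auto simp: divide_right_mono)
qed

lemma heat_double_time:
  assumes s: "s > 0"
  shows "heat d r s = 2 powr (d / 2) * exp (- r\<^sup>2 / (8 * s)) * heat d r (2 * s)"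
proof -
  have "(4 * pi * (2 * s)) powr (- d / 2) = 2 powr (- d / 2) * (4 * pi * s) powr (- d / 2)"
    by (simp add: powr_mult[symmetric] mult_ac)
  moreover have "exp (- r\<^sup>2 / (4 * s)) = exp (- r\<^sup>2 / (8 * s)) * exp (- r\<^sup>2 / (4 * (2 * s)))"
    using s by (simp add: exp_add[symmetric] field_simps)
  ultimately show ?thesis
    by (simp add: heat_def powr_minus_divide powr_minus field_simps)
qed

text \<open>Away from the centre, the kernel at time \<open>s\<close> is an exponentially small multiple
  of the kernel at time \<open>2 s\<close>, which still has total mass one.\<close>
lemma heat_le_double_time:
  assumes "s > 0" "0 \<le> \<rho>" "\<rho> \<le> r"
  shows "heat d r s \<le> 2 powr (d / 2) * exp (- \<rho>\<^sup>2 / (8 * s)) * heat d r (2 * s)"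
proof -
  have "\<rho>\<^sup>2 \<le> r\<^sup>2"
    using assms by (intro power_mono) auto
  then have "exp (- r\<^sup>2 / (8 * s)) \<le> exp (- \<rho>\<^sup>2 / (8 * s))"
    using assms by (simp add: divide_right_mono)
  then show ?thesis
    unfolding heat_double_time[OF \<open>s > 0\<close>, of d r]
    by (intro mult_right_mono mult_left_mono heat_nonneg) auto
qed

lemma heat1_eq: "s > 0 \<Longrightarrow> heat 1 r s = exp (- r\<^sup>2 / (4 * s)) / sqrt (4 * pi * s)"
  by (simp add: heat_def powr_minus_divide powr_half_sqrt)

text \<open>The closed form of \<^const>\<open>dheat1\<close>; unlike the derivative it is visibly measurable.\<close>
definition dheat :: "real \<Rightarrow> real \<Rightarrow> real" where
  "dheat \<xi> s = - \<xi> / (2 * s) * heat 1 \<xi> s"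

lemma dheat_measurable [measurable]: "(\<lambda>z. dheat (f z) (g z)) \<in> borel_measurable M"
  if [measurable]: "f \<in> borel_measurable M" "g \<in> borel_measurable M"
  unfolding dheat_def by measurable

lemma dheat_nonpos: "0 \<le> \<xi> \<Longrightarrow> 0 < s \<Longrightarrow> dheat \<xi> s \<le> 0"
  by (simp add: dheat_def heat_nonneg)

lemma heat1_has_real_derivative:
  assumes s: "s > 0"
  shows "((\<lambda>z. heat 1 z s) has_real_derivative dheat \<xi> s) (at \<xi>)"
proof -
  have "((\<lambda>z. - z\<^sup>2 / (4 * s)) has_real_derivative - \<xi> / (2 * s)) (at \<xi>)"
    using s by (auto intro!: derivative_eq_intros)
  from DERIV_cdivide[OF DERIV_fun_exp[OF this], of "sqrt (4 * pi * s)"]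
  show ?thesis
    using s by (simp add: heat1_eq dheat_def mult.commute)
qed

lemma dheat1_eq_dheat: "s > 0 \<Longrightarrow> dheat1 \<xi> s = dheat \<xi> s"
  unfolding dheat1_def heat_abs by (rule DERIV_imp_deriv[OF heat1_has_real_derivative])

lemma exp_minus_le:
  fixes w :: real
  assumes "w > 0"
  shows exp_minus_le_inverse: "exp (- w) \<le> 1 / w"
    and exp_minus_le_2_div_square: "exp (- w) \<le> 2 / w\<^sup>2"
proof -
  have "w \<le> exp w"
    using exp_ge_add_one_self[of w] by linarith
  moreover have "w\<^sup>2 / 2 \<le> exp w"
    using exp_lower_Taylor_quadratic[of w] assms by simp
  ultimately show "exp (- w) \<le> 1 / w" "exp (- w) \<le> 2 / w\<^sup>2"
    using assms by (simp_all add: exp_minus field_simps)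
qed

lemma heat1_le:
  assumes "s > 0"
  shows "heat 1 r s \<le> exp (- r\<^sup>2 / (4 * s)) / sqrt s"
proof -
  have "sqrt s \<le> sqrt (4 * pi * s)"
    using assms pi_gt3 by (intro real_sqrt_le_mono) simp
  then show ?thesis
    using assms by (simp add: heat1_eq divide_left_mono)
qed

lemma heat1_le_sqrt_div_square:
  assumes s: "s > 0" and a: "a > 0"
  shows "heat 1 a s \<le> 4 * sqrt s / a\<^sup>2"
proof -
  have "exp (- (a\<^sup>2 / (4 * s))) \<le> 4 * s / a\<^sup>2"
    using exp_minus_le_inverse[of "a\<^sup>2 / (4 * s)"] s a by simp
  then have "exp (- a\<^sup>2 / (4 * s)) / sqrt s \<le> (4 * s / a\<^sup>2) / sqrt s"
    using s by (intro divide_right_mono) simp_all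
  with heat1_le[OF s, of a] have "heat 1 a s \<le> (4 * s / a\<^sup>2) / sqrt s"
    by linarith
  also have "\<dots> = 4 * (s / sqrt s) / a\<^sup>2"
    by simp
  also have "s / sqrt s = sqrt s"
    using s by (simp add: real_div_sqrt)
  finally show ?thesis .
qed

lemma abs_dheat_le:
  assumes s: "s > 0" and a: "a > 0"
  shows "\<bar>dheat a s\<bar> \<le> 16 * sqrt s / a ^ 3"
proof -
  have "exp (- (a\<^sup>2 / (4 * s))) \<le> 32 * s\<^sup>2 / a ^ 4"
    using exp_minus_le_2_div_square[of "a\<^sup>2 / (4 * s)"] s a
    by (simp add: power_divide power2_eq_square eval_nat_numeral field_simps)
  then have "exp (- a\<^sup>2 / (4 * s)) / sqrt s \<le> (32 * s\<^sup>2 / a ^ 4) / sqrt s"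
    using s by (intro divide_right_mono) simp_all
  with heat1_le[OF s, of a] have "heat 1 a s \<le> (32 * s\<^sup>2 / a ^ 4) / sqrt s"
    by linarith
  have "\<bar>dheat a s\<bar> = a / (2 * s) * heat 1 a s"
    using s a by (simp add: dheat_def abs_mult heat_nonneg)
  also have "\<dots> \<le> a / (2 * s) * ((32 * s\<^sup>2 / a ^ 4) / sqrt s)"
    using \<open>heat 1 a s \<le> (32 * s\<^sup>2 / a ^ 4) / sqrt s\<close> s a by (intro mult_left_mono) simp_all
  also have "\<dots> = 16 * (s / sqrt s) / a ^ 3"
    using s a by (simp add: field_simps power2_eq_square eval_nat_numeral)
  also have "s / sqrt s = sqrt s"
    using s by (simp add: real_div_sqrt)
  finally show ?thesis .
qed

lemma nn_integral_abs_dheat_tail: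
  assumes s: "s > 0" and a: "a \<ge> 0"
  shows "(\<integral>\<^sup>+y. ennreal \<bar>dheat (a + y) s\<bar> * indicator {0..} y \<partial>lborel) = ennreal (heat 1 a s)"
proof -
  have "(\<integral>\<^sup>+y. ennreal \<bar>dheat (a + y) s\<bar> * indicator {0..} y \<partial>lborel)
      = (\<integral>\<^sup>+y. ennreal (- dheat (a + y) s) * indicator {0..} y \<partial>lborel)"
    using s a by (intro nn_integral_cong) (simp add: dheat_nonpos abs_of_nonpos split: split_indicator)
  also have "\<dots> = 0 - (- heat 1 (a + 0) s)"
  proof (rule nn_integral_FTC_atLeast)
    show "((\<lambda>y. - heat 1 (a + y) s) has_real_derivative - dheat (a + y) s) (at y)" for y
    proof -
      have "((\<lambda>y. heat 1 (y + a) s) has_real_derivative dheat (y + a) s) (at y)"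
        using heat1_has_real_derivative[OF s, of "y + a"] by (simp add: DERIV_shift)
      from DERIV_minus[OF this] show ?thesis
        by (simp add: add.commute)
    qed
    show "0 \<le> - dheat (a + y) s" if "0 \<le> y" for y
      using that s a by (simp add: dheat_nonpos)
    have "((\<lambda>y. - (exp (- (a + y)\<^sup>2 / (4 * s)) / sqrt (4 * pi * s))) \<longlongrightarrow> 0) at_top"
      using s by real_asymp
    then show "((\<lambda>y. - heat 1 (a + y) s) \<longlongrightarrow> 0) at_top"
      using s by (simp add: heat1_eq)
  qed simp
  finally show ?thesis
    by simp
qed

section \<open>The boundary correction \<open>H\<close>\<close>

definition Hker_integrand :: "real \<Rightarrow> real \<Rightarrow> real \<Rightarrow> (real^'n) \<times> real \<Rightarrow> (real^'n) \<times> real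
    \<Rightarrow> real \<Rightarrow> real \<Rightarrow> real" where
  "Hker_integrand eps kap del x y t \<tau> =
     heat (real CARD('n)) (norm (fst x - fst y)) ((t - \<tau>) / eps + kap / del * \<tau>)
     * dheat (snd x + snd y + \<tau> / del) ((t - \<tau>) / eps)"

lemma borel_measurable_fst' [measurable (raw)]:
  fixes f :: "'a \<Rightarrow> 'b::euclidean_space \<times> 'c::euclidean_space"
  shows "f \<in> borel_measurable M \<Longrightarrow> (\<lambda>x. fst (f x)) \<in> borel_measurable M"
  by (erule measurable_compose) (intro borel_measurable_continuous_onI continuous_intros)

lemma borel_measurable_snd' [measurable (raw)]:
  fixes f :: "'a \<Rightarrow> 'b::euclidean_space \<times> 'c::euclidean_space"
  shows "f \<in> borel_measurable M \<Longrightarrow> (\<lambda>x. snd (f x)) \<in> borel_measurable M"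
  by (erule measurable_compose) (intro borel_measurable_continuous_onI continuous_intros)

lemma Hker_integrand_measurable [measurable (raw)]:
  "(\<lambda>p. Hker_integrand eps kap del x (f p) t (g p)) \<in> borel_measurable M"
  if [measurable]: "f \<in> borel_measurable M" "g \<in> borel_measurable M"
  for f :: "_ \<Rightarrow> (real^'n) \<times> real"
  unfolding Hker_integrand_def by measurable

lemma Hker_eq_integral:
  assumes "eps > 0" "t \<ge> 0"
  shows "Hker eps kap del x y t
       = -2 * (\<integral>\<tau>. indicator {0<..<t} \<tau> * Hker_integrand eps kap del x y t \<tau> \<partial>lborel)"
  unfolding Hker_def interval_lebesgue_integral_def set_lebesgue_integral_def using assms
  by (auto intro!: Bochner_Integration.integral_cong arg_cong[where f = "\<lambda>z. -2 * z"]
      simp: Hker_integrand_def dheat1_eq_dheat einterval_iff split: split_indicator)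

lemma Hker_measurable:
  assumes "eps > 0" "t \<ge> 0"
  shows "(\<lambda>y. Hker eps kap del x y t) \<in> borel_measurable borel"
proof -
  have "(\<lambda>(y, \<tau>). indicator {0<..<t} \<tau> * Hker_integrand eps kap del x y t \<tau>)
      \<in> borel_measurable (lborel \<Otimes>\<^sub>M lborel)"
    unfolding lborel_prod by measurable
  from lborel.borel_measurable_lebesgue_integral[OF this]
  show ?thesis
    using assms by (simp add: Hker_eq_integral)
qed

lemma ennreal_abs_integral_le:
  fixes f :: "'a \<Rightarrow> real"
  shows "ennreal \<bar>integral\<^sup>L M f\<bar> \<le> (\<integral>\<^sup>+x. ennreal \<bar>f x\<bar> \<partial>M)"
  using integral_norm_bound_ennreal[of M f] by (cases "integrable M f") (auto simp: not_integrable_integral_eq)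

lemma ennreal_abs_Hker_le:
  assumes "eps > 0" "t \<ge> 0"
  shows "ennreal \<bar>Hker eps kap del x y t\<bar>
       \<le> 2 * (\<integral>\<^sup>+\<tau>. ennreal (indicator {0<..<t} \<tau> * \<bar>Hker_integrand eps kap del x y t \<tau>\<bar>) \<partial>lborel)"
proof -
  have "ennreal \<bar>Hker eps kap del x y t\<bar>
      = 2 * ennreal \<bar>\<integral>\<tau>. indicator {0<..<t} \<tau> * Hker_integrand eps kap del x y t \<tau> \<partial>lborel\<bar>"
    using assms by (simp add: Hker_eq_integral abs_mult ennreal_mult)
  also have "\<dots> \<le> 2 * (\<integral>\<^sup>+\<tau>. ennreal \<bar>indicator {0<..<t} \<tau> * Hker_integrand eps kap del x y t \<tau>\<bar> \<partial>lborel)"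
    by (intro mult_left_mono ennreal_abs_integral_le) simp
  finally show ?thesis
    by (simp add: abs_mult)
qed

lemma nn_integral_abs_Hker_le:
  fixes e :: "'a::euclidean_space \<Rightarrow> (real^'n) \<times> real"
  assumes eps: "eps > 0" and t: "t > 0" and B: "B \<ge> 0"
    and [measurable]: "e \<in> borel_measurable borel" "S \<in> sets borel"
    and inner: "\<And>\<tau>. 0 < \<tau> \<Longrightarrow> \<tau> < t \<Longrightarrow>
      (\<integral>\<^sup>+y. ennreal (indicator S y * \<bar>Hker_integrand eps kap del x (e y) t \<tau>\<bar>) \<partial>lborel) \<le> ennreal B"
  shows "(\<integral>\<^sup>+y. ennreal (indicator S y * \<bar>Hker eps kap del x (e y) t\<bar>) \<partial>lborel) \<le> ennreal (2 * t * B)"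
proof -
  let ?G = "\<lambda>y \<tau>. ennreal (indicator S y * (indicator {0<..<t} \<tau> * \<bar>Hker_integrand eps kap del x (e y) t \<tau>\<bar>))"
  have "(\<integral>\<^sup>+y. ennreal (indicator S y * \<bar>Hker eps kap del x (e y) t\<bar>) \<partial>lborel)
      \<le> (\<integral>\<^sup>+y. 2 * (\<integral>\<^sup>+\<tau>. ?G y \<tau> \<partial>lborel) \<partial>lborel)"
  proof (intro nn_integral_mono)
    fix y
    show "ennreal (indicator S y * \<bar>Hker eps kap del x (e y) t\<bar>) \<le> 2 * (\<integral>\<^sup>+\<tau>. ?G y \<tau> \<partial>lborel)"
      using ennreal_abs_Hker_le[OF eps, of t kap del x "e y"] t by (cases "y \<in> S") auto
  qed
  also have "\<dots> = 2 * (\<integral>\<^sup>+\<tau>. (\<integral>\<^sup>+y. ?G y \<tau> \<partial>lborel) \<partial>lborel)"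
    by (subst lborel_pair.Fubini', simp only: lborel_prod measurable_lborel2; measurable)
       (rule nn_integral_cmult, measurable)
  also have "\<dots> \<le> 2 * (\<integral>\<^sup>+\<tau>. ennreal B * indicator {0<..<t} \<tau> \<partial>lborel)"
    using inner by (intro mult_left_mono nn_integral_mono) (simp_all split: split_indicator)
  also have "\<dots> = ennreal (2 * t * B)"
    using t B by (simp add: nn_integral_cmult_indicator ennreal_mult mult_ac)
  finally show ?thesis .
qed

lemma nn_integral_lborel_pair:
  fixes g :: "'a::euclidean_space \<times> 'b::euclidean_space \<Rightarrow> ennreal"
  assumes [measurable]: "g \<in> borel_measurable borel"
  shows "(\<integral>\<^sup>+y. g y \<partial>lborel) = (\<integral>\<^sup>+a. (\<integral>\<^sup>+b. g (a, b) \<partial>lborel) \<partial>lborel)"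
proof -
  have "(\<integral>\<^sup>+y. g y \<partial>lborel) = (\<integral>\<^sup>+y. g y \<partial>(lborel \<Otimes>\<^sub>M lborel))"
    by (simp only: lborel_prod)
  also have "\<dots> = (\<integral>\<^sup>+a. (\<integral>\<^sup>+b. g (a, b) \<partial>lborel) \<partial>lborel)"
    by (rule lborel.nn_integral_fst[symmetric]) (simp only: lborel_prod measurable_lborel2 assms)
  finally show ?thesis .
qed

lemma open_half_space: "open half_space"
  unfolding half_space_def by (intro open_Times) auto

lemma half_space_borel [measurable]: "half_space \<in> sets borel"
  using open_half_space by (rule borel_open)

lemma indicator_half_space_Pair: "indicator half_space (a, b) = (indicator {0<..} b :: real)"
  by (simp add: half_space_def indicator_def)

text \<open>Integrating first in \<open>y\<^sub>N\<close> gives the tail mass of \<open>\<partial>\<^sub>\<xi>\<Gamma>\<^sub>1\<close> and then in \<open>y'\<close> the unit mass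
  of \<open>\<Gamma>\<^sub>N\<^sub>-\<^sub>1\<close>, whatever the value of \<open>kap \<ge> 0\<close>.\<close>
lemma nn_integral_Hker_integrand_half_space_le:
  fixes x :: "(real^'n) \<times> real"
  assumes eps: "eps > 0" and kap: "kap \<ge> 0" and del: "del > 0" and \<tau>: "0 < \<tau>" "\<tau> < t"
    and x: "snd x \<ge> 0"
  shows "(\<integral>\<^sup>+y. ennreal (indicator half_space y * \<bar>Hker_integrand eps kap del x y t \<tau>\<bar>) \<partial>lborel)
       \<le> ennreal (heat 1 (snd x + \<tau> / del) ((t - \<tau>) / eps))"
proof -
  define s where "s = (t - \<tau>) / eps"
  define \<sigma> where "\<sigma> = (t - \<tau>) / eps + kap / del * \<tau>"
  define a where "a = snd x + \<tau> / del"
  have s: "s > 0" and \<sigma>: "\<sigma> > 0" and a: "a \<ge> 0"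
    using eps kap del \<tau> x by (auto simp: s_def \<sigma>_def a_def intro!: add_pos_nonneg)
  let ?\<Gamma> = "\<lambda>y'. ennreal (heat (real CARD('n)) (norm (y' - fst x)) \<sigma>)"
  have "(\<integral>\<^sup>+y. ennreal (indicator half_space y * \<bar>Hker_integrand eps kap del x y t \<tau>\<bar>) \<partial>lborel)
     = (\<integral>\<^sup>+y'. (\<integral>\<^sup>+yN. ennreal (indicator half_space (y', yN) * \<bar>Hker_integrand eps kap del x (y', yN) t \<tau>\<bar>) \<partial>lborel) \<partial>lborel)"
    by (rule nn_integral_lborel_pair) measurable
  also have "\<dots> = (\<integral>\<^sup>+y'. ?\<Gamma> y' * (\<integral>\<^sup>+yN. ennreal \<bar>dheat (a + yN) s\<bar> * indicator {0<..} yN \<partial>lborel) \<partial>lborel)"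
  proof (intro nn_integral_cong)
    fix y' :: "real^'n"
    have "(\<integral>\<^sup>+yN. ennreal (indicator half_space (y', yN) * \<bar>Hker_integrand eps kap del x (y', yN) t \<tau>\<bar>) \<partial>lborel)
        = (\<integral>\<^sup>+yN. ?\<Gamma> y' * (ennreal \<bar>dheat (a + yN) s\<bar> * indicator {0<..} yN) \<partial>lborel)"
      by (intro nn_integral_cong)
         (auto simp: indicator_half_space_Pair Hker_integrand_def abs_mult heat_nonneg norm_minus_commute
           ennreal_mult s_def \<sigma>_def a_def ac_simps split: split_indicator)
    then show "(\<integral>\<^sup>+yN. ennreal (indicator half_space (y', yN) * \<bar>Hker_integrand eps kap del x (y', yN) t \<tau>\<bar>) \<partial>lborel)
        = ?\<Gamma> y' * (\<integral>\<^sup>+yN. ennreal \<bar>dheat (a + yN) s\<bar> * indicator {0<..} yN \<partial>lborel)"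
      by (simp add: nn_integral_cmult)
  qed
  also have "\<dots> \<le> (\<integral>\<^sup>+y'. ?\<Gamma> y' * ennreal (heat 1 a s) \<partial>lborel)"
  proof (intro nn_integral_mono mult_left_mono)
    have "(\<integral>\<^sup>+yN. ennreal \<bar>dheat (a + yN) s\<bar> * indicator {0<..} yN \<partial>lborel)
        \<le> (\<integral>\<^sup>+yN. ennreal \<bar>dheat (a + yN) s\<bar> * indicator {0..} yN \<partial>lborel)"
      by (intro nn_integral_mono) (simp split: split_indicator)
    then show "(\<integral>\<^sup>+yN. ennreal \<bar>dheat (a + yN) s\<bar> * indicator {0<..} yN \<partial>lborel) \<le> ennreal (heat 1 a s)"
      using nn_integral_abs_dheat_tail[OF s a] by simp
  qed simp
  also have "\<dots> = ennreal (heat 1 a s)"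
    using nn_integral_heat[OF \<sigma>, of "fst x"] by (simp add: nn_integral_multc)
  finally show ?thesis
    by (simp add: a_def s_def)
qed

lemma nn_integral_Hker_integrand_boundary:
  fixes x :: "(real^'n) \<times> real"
  assumes eps: "eps > 0" and kap: "kap \<ge> 0" and del: "del > 0" and \<tau>: "0 < \<tau>" "\<tau> < t"
  shows "(\<integral>\<^sup>+y'. ennreal \<bar>Hker_integrand eps kap del x (y', 0) t \<tau>\<bar> \<partial>lborel)
       = ennreal \<bar>dheat (snd x + \<tau> / del) ((t - \<tau>) / eps)\<bar>"
proof -
  define \<sigma> where "\<sigma> = (t - \<tau>) / eps + kap / del * \<tau>"
  have \<sigma>: "\<sigma> > 0"
    using eps kap del \<tau> by (auto simp: \<sigma>_def intro!: add_pos_nonneg)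
  have "(\<integral>\<^sup>+y'. ennreal \<bar>Hker_integrand eps kap del x (y', 0) t \<tau>\<bar> \<partial>lborel)
      = (\<integral>\<^sup>+y'. ennreal (heat (real CARD('n)) (norm (y' - fst x)) \<sigma>)
                * ennreal \<bar>dheat (snd x + \<tau> / del) ((t - \<tau>) / eps)\<bar> \<partial>lborel)"
    by (intro nn_integral_cong)
       (simp add: Hker_integrand_def abs_mult heat_nonneg norm_minus_commute ennreal_mult \<sigma>_def)
  also have "\<dots> = ennreal \<bar>dheat (snd x + \<tau> / del) ((t - \<tau>) / eps)\<bar>"
    using nn_integral_heat[OF \<sigma>, of "fst x"] by (simp add: nn_integral_multc)
  finally show ?thesis .
qed

lemma sqrt_div_le_sqrt_div:
  assumes "0 \<le> s" "s \<le> s'" "0 < c" "c \<le> a"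
  shows "sqrt s / a ^ n \<le> sqrt s' / c ^ n"
  using assms by (intro frac_le real_sqrt_le_mono power_mono) auto

lemma nn_integral_Hker_half_space_le:
  fixes x :: "(real^'n) \<times> real"
  assumes eps: "eps > 0" and kap: "kap \<ge> 0" and del: "del > 0" and t: "t > 0"
    and c: "c > 0" "c \<le> snd x"
  shows "(\<integral>\<^sup>+y. ennreal (indicator half_space y * \<bar>Hker eps kap del x y t\<bar>) \<partial>lborel)
       \<le> ennreal (8 * t * sqrt (t / eps) / c\<^sup>2)"
proof -
  have "(\<integral>\<^sup>+y. ennreal (indicator half_space y * \<bar>Hker eps kap del x (id y) t\<bar>) \<partial>lborel)
      \<le> ennreal (2 * t * (4 * sqrt (t / eps) / c\<^sup>2))"
  proof (rule nn_integral_abs_Hker_le[OF eps t])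
    fix \<tau> assume \<tau>: "0 < \<tau>" "\<tau> < t"
    have "c \<le> snd x + \<tau> / del"
      using \<tau> del c by (simp add: add_increasing2)
    have "heat 1 (snd x + \<tau> / del) ((t - \<tau>) / eps) \<le> 4 * (sqrt ((t - \<tau>) / eps) / (snd x + \<tau> / del)\<^sup>2)"
      using heat1_le_sqrt_div_square[of "(t - \<tau>) / eps" "snd x + \<tau> / del"] \<tau> eps del c
      by (simp add: add_pos_pos)
    also have "\<dots> \<le> 4 * (sqrt (t / eps) / c\<^sup>2)"
      using \<tau> eps c \<open>c \<le> snd x + \<tau> / del\<close>
      by (intro mult_left_mono sqrt_div_le_sqrt_div) (auto simp: divide_right_mono)
    finally show "(\<integral>\<^sup>+y. ennreal (indicator half_space y * \<bar>Hker_integrand eps kap del x (id y) t \<tau>\<bar>) \<partial>lborel)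
        \<le> ennreal (4 * sqrt (t / eps) / c\<^sup>2)"
      using nn_integral_Hker_integrand_half_space_le[OF eps kap del \<tau>, of x] c
      by (auto elim!: order_trans intro!: ennreal_leI)
  qed (use eps t c in auto)
  then show ?thesis
    by (simp add: mult.assoc)
qed

lemma nn_integral_Hker_boundary_le:
  fixes x :: "(real^'n) \<times> real"
  assumes eps: "eps > 0" and kap: "kap \<ge> 0" and del: "del > 0" and t: "t > 0"
    and c: "c > 0" "c \<le> snd x"
  shows "(\<integral>\<^sup>+y'. ennreal \<bar>Hker eps kap del x (y', 0) t\<bar> \<partial>lborel) \<le> ennreal (32 * t * sqrt (t / eps) / c ^ 3)"
proof -
  have "(\<integral>\<^sup>+y'. ennreal (indicator UNIV y' * \<bar>Hker eps kap del x ((\<lambda>y'. (y', 0)) y') t\<bar>) \<partial>lborel)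
      \<le> ennreal (2 * t * (16 * sqrt (t / eps) / c ^ 3))"
  proof (rule nn_integral_abs_Hker_le[OF eps t])
    fix \<tau> assume \<tau>: "0 < \<tau>" "\<tau> < t"
    have "c \<le> snd x + \<tau> / del"
      using \<tau> del c by (simp add: add_increasing2)
    have "\<bar>dheat (snd x + \<tau> / del) ((t - \<tau>) / eps)\<bar> \<le> 16 * (sqrt ((t - \<tau>) / eps) / (snd x + \<tau> / del) ^ 3)"
      using abs_dheat_le[of "(t - \<tau>) / eps" "snd x + \<tau> / del"] \<tau> eps del c
      by (simp add: add_pos_pos)
    also have "\<dots> \<le> 16 * (sqrt (t / eps) / c ^ 3)"
      using \<tau> eps c \<open>c \<le> snd x + \<tau> / del\<close>
      by (intro mult_left_mono sqrt_div_le_sqrt_div) (auto simp: divide_right_mono)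
    finally show "(\<integral>\<^sup>+y'. ennreal (indicator UNIV y' * \<bar>Hker_integrand eps kap del x ((\<lambda>y'. (y', 0)) y') t \<tau>\<bar>) \<partial>lborel)
        \<le> ennreal (16 * sqrt (t / eps) / c ^ 3)"
      using nn_integral_Hker_integrand_boundary[OF eps kap del \<tau>, of x]
      by (auto intro!: ennreal_leI)
  qed (use eps t c in auto)
  then show ?thesis
    by (simp add: mult.assoc)
qed

section \<open>The Dirichlet part \<open>G\<^sub>0\<close>\<close>

lemma norm_diff_refl_pt_ge:
  fixes x y :: "(real^'n) \<times> real"
  assumes "0 \<le> snd x" "0 \<le> snd y"
  shows "norm (x - y) \<le> norm (x - refl_pt y)" and "snd x + snd y \<le> norm (x - refl_pt y)"
proof -
  have "(snd x - snd y)\<^sup>2 \<le> (snd x + snd y)\<^sup>2"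
    using assms by (simp add: power2_eq_square algebra_simps)
  then show "norm (x - y) \<le> norm (x - refl_pt y)"
    by (simp add: refl_pt_def norm_Pair minus_prod_def)
  show "snd x + snd y \<le> norm (x - refl_pt y)"
    using norm_snd_le[of "snd x + snd y" "fst x - fst y"] assms
    by (simp add: refl_pt_def minus_prod_def)
qed

lemma norm_snd_diff_le:
  fixes x y :: "'a::real_normed_vector \<times> 'b::real_normed_vector"
  shows "norm (snd x - snd y) \<le> norm (x - y)"
  using norm_snd_le[of "snd x - snd y" "fst x - fst y"] by (simp add: minus_prod_def)

lemma G0_measurable [measurable]: "(\<lambda>y. G0 x y s) \<in> borel_measurable borel"
  unfolding G0_def refl_pt_def by measurable

text \<open>The reflected Gaussian centred at \<open>y\<^sup>*\<close> sees \<open>x\<close> at distance at least \<open>x\<^sub>N \<ge> \<rho>\<close>,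
  so it is exponentially small against a Gaussian centred at \<open>y\<close>.\<close>
lemma heat_refl_pt_le:
  fixes x y :: "(real^'n) \<times> real"
  assumes "s > 0" "0 \<le> \<rho>" "\<rho> \<le> snd x" "0 \<le> snd y"
  shows "heat d (norm (x - refl_pt y)) s
       \<le> 2 powr (d / 2) * exp (- \<rho>\<^sup>2 / (8 * s)) * heat d (norm (x - y)) (2 * s)"
proof -
  have refl: "norm (x - y) \<le> norm (x - refl_pt y)" "\<rho> \<le> norm (x - refl_pt y)"
    using norm_diff_refl_pt_ge[of x y] assms by auto
  have "heat d (norm (x - refl_pt y)) s
      \<le> 2 powr (d / 2) * exp (- \<rho>\<^sup>2 / (8 * s)) * heat d (norm (x - refl_pt y)) (2 * s)"
    using assms refl by (intro heat_le_double_time) auto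
  also have "\<dots> \<le> 2 powr (d / 2) * exp (- \<rho>\<^sup>2 / (8 * s)) * heat d (norm (x - y)) (2 * s)"
    using assms refl by (intro mult_left_mono heat_antimono) auto
  finally show ?thesis .
qed

text \<open>Near \<open>x\<close> the integrand is small; far from \<open>x\<close> the kernel is exponentially small.\<close>
lemma abs_mult_heat_le_near_far:
  fixes a r \<epsilon> B \<rho> s :: real
  assumes s: "s > 0" and \<rho>: "0 \<le> \<rho>" and \<epsilon>: "0 \<le> \<epsilon>"
    and near: "r < \<rho> \<Longrightarrow> \<bar>a\<bar> \<le> \<epsilon>" and bound: "\<bar>a\<bar> \<le> B"
  shows "\<bar>a\<bar> * heat d r s \<le> \<epsilon> * heat d r s + B * (2 powr (d / 2) * exp (- \<rho>\<^sup>2 / (8 * s))) * heat d r (2 * s)"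
proof -
  have B: "0 \<le> B"
    using bound abs_ge_zero[of a] by linarith
  show ?thesis
  proof (cases "r < \<rho>")
    case True
    have "\<bar>a\<bar> * heat d r s \<le> \<epsilon> * heat d r s"
      using near[OF True] heat_nonneg by (rule mult_right_mono)
    moreover have "0 \<le> B * (2 powr (d / 2) * exp (- \<rho>\<^sup>2 / (8 * s))) * heat d r (2 * s)"
      using B by (simp add: heat_nonneg)
    ultimately show ?thesis
      by linarith
  next
    case False
    then have "heat d r s \<le> 2 powr (d / 2) * exp (- \<rho>\<^sup>2 / (8 * s)) * heat d r (2 * s)"
      using s \<rho> by (intro heat_le_double_time) auto
    with bound B have "\<bar>a\<bar> * heat d r s \<le> B * (2 powr (d / 2) * exp (- \<rho>\<^sup>2 / (8 * s))) * heat d r (2 * s)"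
      using mult_mono[of "\<bar>a\<bar>" B] by (simp add: heat_nonneg mult.assoc)
    moreover have "0 \<le> \<epsilon> * heat d r s"
      using \<epsilon> by (simp add: heat_nonneg)
    ultimately show ?thesis
      by linarith
  qed
qed

lemma abs_G0_mult_minus_le:
  fixes x :: "(real^'n) \<times> real" and \<phi> :: "(real^'n) \<times> real \<Rightarrow> real" and s \<rho> :: real
  defines "E \<equiv> 2 powr ((real CARD('n) + 1) / 2) * exp (- \<rho>\<^sup>2 / (8 * s))"
  assumes s: "s > 0" and \<rho>: "0 < \<rho>" "\<rho> \<le> snd x"
    and M: "\<forall>y\<in>half_space. \<bar>\<phi> y\<bar> \<le> M"
    and near: "\<forall>y\<in>half_space. dist y x < \<rho> \<longrightarrow> \<bar>\<phi> y - \<phi> x\<bar> \<le> \<epsilon>"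
  shows "\<bar>indicator half_space y * (G0 x y s * \<phi> y) - \<phi> x * heat (real CARD('n) + 1) (norm (x - y)) s\<bar>
       \<le> \<epsilon> * heat (real CARD('n) + 1) (norm (x - y)) s + 3 * M * E * heat (real CARD('n) + 1) (norm (x - y)) (2 * s)"
proof -
  define \<Gamma> where "\<Gamma> = heat (real CARD('n) + 1) (norm (x - y)) s"
  define \<Gamma>\<^sub>2 where "\<Gamma>\<^sub>2 = heat (real CARD('n) + 1) (norm (x - y)) (2 * s)"
  define \<Gamma>\<^sub>r where "\<Gamma>\<^sub>r = heat (real CARD('n) + 1) (norm (x - refl_pt y)) s"
  have "x \<in> half_space"
    using \<rho> by (cases x) (auto simp: half_space_def)
  then have Mx: "\<bar>\<phi> x\<bar> \<le> M" and \<epsilon>: "0 \<le> \<epsilon>"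
    using M near \<rho> by auto
  note near_far = abs_mult_heat_le_near_far[OF s less_imp_le[OF \<rho>(1)] \<epsilon>,
      where r = "norm (x - y)" and d = "real CARD('n) + 1", folded E_def \<Gamma>_def \<Gamma>\<^sub>2_def]
  have nonneg: "0 \<le> \<Gamma>\<^sub>r" "0 \<le> M * E * \<Gamma>\<^sub>2"
    using Mx by (simp_all add: \<Gamma>\<^sub>2_def \<Gamma>\<^sub>r_def E_def heat_nonneg)
  show ?thesis
  proof (cases "y \<in> half_space")
    case True
    have "\<bar>\<phi> y - \<phi> x\<bar> * \<Gamma> \<le> \<epsilon> * \<Gamma> + (2 * M) * E * \<Gamma>\<^sub>2"
      using near M Mx True by (intro near_far) (auto simp: dist_norm norm_minus_commute)
    moreover have "\<bar>\<phi> y\<bar> * \<Gamma>\<^sub>r \<le> M * E * \<Gamma>\<^sub>2"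
    proof -
      have "\<Gamma>\<^sub>r \<le> E * \<Gamma>\<^sub>2"
        using heat_refl_pt_le[OF s, of \<rho> x y "real CARD('n) + 1"] True \<rho>
        by (simp add: \<Gamma>\<^sub>r_def \<Gamma>\<^sub>2_def E_def half_space_def mem_Times_iff)
      with M True nonneg Mx show ?thesis
        using mult_mono[of "\<bar>\<phi> y\<bar>" M \<Gamma>\<^sub>r "E * \<Gamma>\<^sub>2"] by (simp add: mult_ac)
    qed
    moreover have "indicator half_space y * (G0 x y s * \<phi> y) - \<phi> x * \<Gamma> = (\<phi> y - \<phi> x) * \<Gamma> - \<phi> y * \<Gamma>\<^sub>r"
      using True by (simp add: G0_def \<Gamma>_def \<Gamma>\<^sub>r_def algebra_simps)
    ultimately show ?thesis
      using abs_triangle_ineq4[of "(\<phi> y - \<phi> x) * \<Gamma>" "\<phi> y * \<Gamma>\<^sub>r"] nonneg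
      unfolding \<Gamma>_def[symmetric] \<Gamma>\<^sub>2_def[symmetric] by (simp add: abs_mult heat_nonneg \<Gamma>_def)
  next
    case False
    then have "\<rho> \<le> norm (x - y)"
      using norm_snd_diff_le[of x y] \<rho> by (cases y) (auto simp: half_space_def)
    then have "\<bar>\<phi> x\<bar> * \<Gamma> \<le> \<epsilon> * \<Gamma> + M * E * \<Gamma>\<^sub>2"
      using Mx by (intro near_far) auto
    with False nonneg show ?thesis
      unfolding \<Gamma>_def[symmetric] \<Gamma>\<^sub>2_def[symmetric] by (simp add: abs_mult \<Gamma>_def heat_nonneg)
  qed
qed

lemma integrable_and_abs_integral_minus_le:
  fixes f k R :: "'a::euclidean_space \<Rightarrow> real"
  assumes k: "integrable M k" "(\<integral>y. k y \<partial>M) = 1" and f: "f \<in> borel_measurable M"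
    and R: "integrable M R" and bound: "\<And>y. \<bar>f y - c * k y\<bar> \<le> R y"
  shows "integrable M f" and "\<bar>(\<integral>y. f y \<partial>M) - c\<bar> \<le> (\<integral>y. R y \<partial>M)"
proof -
  have "norm (f y - c * k y) \<le> norm (R y)" for y
    using bound[of y] by simp
  then have diff: "integrable M (\<lambda>y. f y - c * k y)"
    using f k by (intro Bochner_Integration.integrable_bound[OF R _ AE_I2]) auto
  from Bochner_Integration.integrable_add[OF diff integrable_mult_right[OF k(1), of c]]
  show f_int: "integrable M f"
    by simp
  have "\<bar>(\<integral>y. f y \<partial>M) - c\<bar> = \<bar>\<integral>y. f y - c * k y \<partial>M\<bar>"
    using f_int k by simp
  also have "\<dots> \<le> (\<integral>y. R y \<partial>M)"
    using diff R bound by (intro integral_abs_bound_integral) auto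
  finally show "\<bar>(\<integral>y. f y \<partial>M) - c\<bar> \<le> (\<integral>y. R y \<partial>M)" .
qed

lemma G0_integral_approx:
  fixes x :: "(real^'n) \<times> real" and \<phi> :: "(real^'n) \<times> real \<Rightarrow> real" and s \<rho> :: real
  defines "E \<equiv> 2 powr ((real CARD('n) + 1) / 2) * exp (- \<rho>\<^sup>2 / (8 * s))"
  assumes s: "s > 0" and \<rho>: "0 < \<rho>" "\<rho> \<le> snd x"
    and M: "\<forall>y\<in>half_space. \<bar>\<phi> y\<bar> \<le> M"
    and near: "\<forall>y\<in>half_space. dist y x < \<rho> \<longrightarrow> \<bar>\<phi> y - \<phi> x\<bar> \<le> \<epsilon>"
    and [measurable]: "(\<lambda>y. indicator half_space y * \<phi> y) \<in> borel_measurable borel"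
  shows "integrable lborel (\<lambda>y. indicator half_space y * (G0 x y s * \<phi> y))"
    and "\<bar>(\<integral>y. indicator half_space y * (G0 x y s * \<phi> y) \<partial>lborel) - \<phi> x\<bar> \<le> \<epsilon> + 3 * M * E"
proof -
  define \<Gamma> where "\<Gamma> s' y = heat (real CARD('n) + 1) (norm (x - y)) s'" for s' y
  have dim: "real DIM((real^'n) \<times> real) = real CARD('n) + 1"
    by simp
  have \<Gamma>: "integrable lborel (\<Gamma> s')" "(\<integral>y. \<Gamma> s' y \<partial>lborel) = 1" if "s' > 0" for s'
    using integrable_heat[OF that, of x] integral_heat[OF that, of x] unfolding dim
    by (simp_all add: \<Gamma>_def[abs_def] norm_minus_commute)
  have "(\<lambda>y. G0 x y s * (indicator half_space y * \<phi> y)) \<in> borel_measurable borel"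
    by measurable
  then have "(\<lambda>y. indicator half_space y * (G0 x y s * \<phi> y)) \<in> borel_measurable lborel"
    by (simp add: mult_ac)
  moreover have "integrable lborel (\<lambda>y. \<epsilon> * \<Gamma> s y + 3 * M * E * \<Gamma> (2 * s) y)"
    using s by (intro Bochner_Integration.integrable_add integrable_mult_right \<Gamma>) simp_all
  moreover have "\<bar>indicator half_space y * (G0 x y s * \<phi> y) - \<phi> x * \<Gamma> s y\<bar>
      \<le> \<epsilon> * \<Gamma> s y + 3 * M * E * \<Gamma> (2 * s) y" for y
    unfolding \<Gamma>_def E_def by (rule abs_G0_mult_minus_le[OF s \<rho> M near])
  ultimately have "integrable lborel (\<lambda>y. indicator half_space y * (G0 x y s * \<phi> y))"
    and "\<bar>(\<integral>y. indicator half_space y * (G0 x y s * \<phi> y) \<partial>lborel) - \<phi> x\<bar>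
      \<le> (\<integral>y. \<epsilon> * \<Gamma> s y + 3 * M * E * \<Gamma> (2 * s) y \<partial>lborel)"
    by (rule integrable_and_abs_integral_minus_le[OF \<Gamma>[OF s]])+
  moreover have "(\<integral>y. \<epsilon> * \<Gamma> s y + 3 * M * E * \<Gamma> (2 * s) y \<partial>lborel) = \<epsilon> + 3 * M * E"
    using \<Gamma> s by simp
  ultimately show "integrable lborel (\<lambda>y. indicator half_space y * (G0 x y s * \<phi> y))"
    and "\<bar>(\<integral>y. indicator half_space y * (G0 x y s * \<phi> y) \<partial>lborel) - \<phi> x\<bar> \<le> \<epsilon> + 3 * M * E"
    by simp_all
qed

section \<open>Uniform convergence\<close>

lemma integrable_mult_bounded_and_abs_integral_le:
  fixes h g :: "'a \<Rightarrow> real"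
  assumes [measurable]: "h \<in> borel_measurable M" "g \<in> borel_measurable M"
    and g: "AE x in M. \<bar>g x\<bar> \<le> C" and C: "0 \<le> C"
    and h: "(\<integral>\<^sup>+x. ennreal \<bar>h x\<bar> \<partial>M) \<le> ennreal B" and B: "0 \<le> B"
  shows "integrable M (\<lambda>x. h x * g x)" and "\<bar>\<integral>x. h x * g x \<partial>M\<bar> \<le> C * B"
proof -
  have "(\<integral>\<^sup>+x. ennreal \<bar>h x * g x\<bar> \<partial>M) \<le> (\<integral>\<^sup>+x. ennreal C * ennreal \<bar>h x\<bar> \<partial>M)"
    using g by (intro nn_integral_mono_AE, eventually_elim)
      (simp add: abs_mult C ennreal_mult[symmetric] mult_right_mono mult.commute)
  also have "\<dots> = ennreal C * (\<integral>\<^sup>+x. ennreal \<bar>h x\<bar> \<partial>M)"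
    by (rule nn_integral_cmult) measurable
  also have "\<dots> \<le> ennreal (C * B)"
    using h C B by (simp add: ennreal_mult mult_left_mono)
  finally have hg: "(\<integral>\<^sup>+x. ennreal \<bar>h x * g x\<bar> \<partial>M) \<le> ennreal (C * B)" .
  then show "integrable M (\<lambda>x. h x * g x)"
    by (intro integrableI_bounded) (auto simp: top.not_eq_extremum intro: le_less_trans)
  have "ennreal \<bar>\<integral>x. h x * g x \<partial>M\<bar> \<le> ennreal (C * B)"
    using ennreal_abs_integral_le hg by (rule order_trans)
  then show "\<bar>\<integral>x. h x * g x \<partial>M\<bar> \<le> C * B"
    using C B by (simp add: ennreal_le_iff)
qed

lemma indicator_mult_measurable_of_continuous_on:
  fixes \<phi> :: "'a::topological_space \<Rightarrow> real"
  assumes "continuous_on S \<phi>" "S \<in> sets borel"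
  shows "(\<lambda>y. indicator S y * \<phi> y) \<in> borel_measurable borel"
  using borel_measurable_continuous_on_indicator[OF assms(2,1)] by simp

text \<open>On the boundary \<open>y = y\<^sup>*\<close>, so \<open>G\<^sub>0\<close> vanishes there and only \<open>H\<close> remains.\<close>
lemma usol_eq:
  assumes "del \<noteq> 0"
    and "integrable lborel (\<lambda>y. indicator half_space y * (G0 x y (t / eps) * \<phi> y))"
    and "integrable lborel (\<lambda>y. indicator half_space y * (Hker eps kap del x y t * \<phi> y))"
  shows "usol eps kap del \<phi> \<psi> x t
       = (\<integral>y. indicator half_space y * (G0 x y (t / eps) * \<phi> y) \<partial>lborel)
         + (\<integral>y. indicator half_space y * (Hker eps kap del x y t * \<phi> y) \<partial>lborel) / del
         + (\<integral>y'. Hker eps kap del x (y', 0) t * \<psi> y' \<partial>lborel) / eps"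
proof -
  have "(\<lambda>y. indicator half_space y *\<^sub>R (Gker eps kap del x y t * \<phi> y))
      = (\<lambda>y. indicator half_space y * (G0 x y (t / eps) * \<phi> y)
           + indicator half_space y * (Hker eps kap del x y t * \<phi> y) / del)"
    by (auto simp: fun_eq_iff Gker_def algebra_simps add_divide_distrib)
  moreover have "Gker eps kap del x (y', 0) t = Hker eps kap del x (y', 0) t / del" for y'
    by (simp add: Gker_def G0_def refl_pt_def)
  ultimately show ?thesis
    using assms by (simp add: usol_def set_lebesgue_integral_def)
qed

lemma Hker_half_space_integral:
  fixes x :: "(real^'n) \<times> real" and \<phi> :: "(real^'n) \<times> real \<Rightarrow> real"
  assumes eps: "eps > 0" and kap: "kap \<ge> 0" and del: "del > 0" and t: "t > 0"
    and c: "0 < c" "c \<le> snd x" and M: "\<forall>y\<in>half_space. \<bar>\<phi> y\<bar> \<le> M"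
    and \<phi>_meas: "(\<lambda>y. indicator half_space y * \<phi> y) \<in> borel_measurable borel"
  shows integrable_Hker_half_space:
      "integrable lborel (\<lambda>y. indicator half_space y * (Hker eps kap del x y t * \<phi> y))"
    and abs_integral_Hker_half_space_le:
      "\<bar>\<integral>y. indicator half_space y * (Hker eps kap del x y t * \<phi> y) \<partial>lborel\<bar>
        \<le> M * (8 * t * sqrt (t / eps) / c\<^sup>2)"
proof -
  have M0: "0 \<le> M"
    using M c by (cases x) (force simp: half_space_def)
  have "(\<lambda>y. Hker eps kap del x y t) \<in> borel_measurable borel"
    using eps t by (intro Hker_measurable) auto
  then have hm: "(\<lambda>y. indicator half_space y * Hker eps kap del x y t) \<in> borel_measurable lborel"
    by measurable
  have gm: "(\<lambda>y. indicator half_space y * \<phi> y) \<in> borel_measurable lborel"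
    using \<phi>_meas by simp
  have gb: "AE y in lborel. \<bar>indicator half_space y * \<phi> y\<bar> \<le> M"
    using M M0 by (intro AE_I2) (simp split: split_indicator)
  have hb: "(\<integral>\<^sup>+y. ennreal \<bar>indicator half_space y * Hker eps kap del x y t\<bar> \<partial>lborel)
      \<le> ennreal (8 * t * sqrt (t / eps) / c\<^sup>2)"
    using nn_integral_Hker_half_space_le[OF eps kap del t c] by (simp add: abs_mult)
  have "0 \<le> 8 * t * sqrt (t / eps) / c\<^sup>2"
    using t eps c by simp
  note bounds = integrable_mult_bounded_and_abs_integral_le[OF hm gm gb M0 hb this]
  have "(\<lambda>y. (indicator half_space y * Hker eps kap del x y t) * (indicator half_space y * \<phi> y))
      = (\<lambda>y. indicator half_space y * (Hker eps kap del x y t * \<phi> y))"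
    by (simp add: fun_eq_iff split: split_indicator)
  with bounds show "integrable lborel (\<lambda>y. indicator half_space y * (Hker eps kap del x y t * \<phi> y))"
    and "\<bar>\<integral>y. indicator half_space y * (Hker eps kap del x y t * \<phi> y) \<partial>lborel\<bar>
        \<le> M * (8 * t * sqrt (t / eps) / c\<^sup>2)"
    by simp_all
qed

lemma abs_integral_Hker_boundary_le:
  fixes x :: "(real^'n) \<times> real" and \<psi> :: "real^'n \<Rightarrow> real"
  assumes eps: "eps > 0" and kap: "kap \<ge> 0" and del: "del > 0" and t: "t > 0"
    and c: "0 < c" "c \<le> snd x"
    and \<psi>_meas: "\<psi> \<in> borel_measurable lborel" and C: "AE y in lborel. \<bar>\<psi> y\<bar> \<le> C" "0 \<le> C"
  shows "\<bar>\<integral>y'. Hker eps kap del x (y', 0) t * \<psi> y' \<partial>lborel\<bar> \<le> C * (32 * t * sqrt (t / eps) / c ^ 3)"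
proof -
  have "(\<lambda>y. Hker eps kap del x y t) \<in> borel_measurable borel"
    using eps t by (intro Hker_measurable) auto
  then have "(\<lambda>y'. Hker eps kap del x (y', 0) t) \<in> borel_measurable lborel"
    by measurable
  from integrable_mult_bounded_and_abs_integral_le(2)[OF this \<psi>_meas C
      nn_integral_Hker_boundary_le[OF eps kap del t c]]
  show ?thesis
    using t eps c by simp
qed

lemma mult_sqrt_div_mono:
  assumes "0 < t" "t \<le> T" "0 < eps"
  shows "t * sqrt (t / eps) \<le> T * sqrt (T / eps)"
  using assms by (intro mult_mono real_sqrt_le_mono divide_right_mono) auto

lemma abs_usol_minus_le:
  fixes x :: "(real^'n) \<times> real" and \<phi> :: "(real^'n) \<times> real \<Rightarrow> real" and \<psi> :: "real^'n \<Rightarrow> real"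
  assumes eps: "eps > 0" and kap: "kap \<ge> 0" and del: "del > 0" and t: "0 < t" "t \<le> T"
    and \<rho>: "0 < \<rho>" "\<rho> \<le> c" and c: "c \<le> snd x"
    and M: "\<forall>y\<in>half_space. \<bar>\<phi> y\<bar> \<le> M"
    and near: "\<forall>y\<in>half_space. dist y x < \<rho> \<longrightarrow> \<bar>\<phi> y - \<phi> x\<bar> \<le> \<epsilon>"
    and \<phi>_meas: "(\<lambda>y. indicator half_space y * \<phi> y) \<in> borel_measurable borel"
    and \<psi>_meas: "\<psi> \<in> borel_measurable lborel"
    and C: "AE y in lborel. \<bar>\<psi> y\<bar> \<le> C" "0 \<le> C"
  shows "\<bar>usol eps kap del \<phi> \<psi> x t - \<phi> x\<bar> \<le> \<epsilon>
      + 3 * M * 2 powr ((real CARD('n) + 1) / 2) * exp (- (\<rho>\<^sup>2 / (8 * T)) * eps)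
      + (8 * M / (del * c\<^sup>2) + 32 * C / c ^ 3 / eps) * (T * sqrt (T / eps))"
proof -
  have c0: "0 < c"
    using \<rho> by simp
  have M0: "0 \<le> M"
    using M c c0 by (cases x) (force simp: half_space_def)
  define G0_term where "G0_term = (\<integral>y. indicator half_space y * (G0 x y (t / eps) * \<phi> y) \<partial>lborel)"
  define half_term where "half_term = (\<integral>y. indicator half_space y * (Hker eps kap del x y t * \<phi> y) \<partial>lborel)"
  define bdry_term where "bdry_term = (\<integral>y'. Hker eps kap del x (y', 0) t * \<psi> y' \<partial>lborel)"
  have G0_int: "integrable lborel (\<lambda>y. indicator half_space y * (G0 x y (t / eps) * \<phi> y))"
    and G0_bound: "\<bar>G0_term - \<phi> x\<bar> \<le> \<epsilon> + 3 * M * (2 powr ((real CARD('n) + 1) / 2) * exp (- \<rho>\<^sup>2 / (8 * (t / eps))))"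
    using G0_integral_approx[of "t / eps" \<rho> x \<phi> M \<epsilon>] \<rho> c eps t M near \<phi>_meas by (auto simp: G0_term_def)
  have decomp: "usol eps kap del \<phi> \<psi> x t - \<phi> x = (G0_term - \<phi> x) + half_term / del + bdry_term / eps"
    using integrable_Hker_half_space[OF eps kap del t(1) c0 c M \<phi>_meas] del
    by (simp add: usol_eq[OF _ G0_int] G0_term_def half_term_def bdry_term_def)
  have "\<bar>half_term / del\<bar> = \<bar>half_term\<bar> / del" "\<bar>bdry_term / eps\<bar> = \<bar>bdry_term\<bar> / eps"
    using del eps by simp_all
  then have "\<bar>usol eps kap del \<phi> \<psi> x t - \<phi> x\<bar> \<le> \<bar>G0_term - \<phi> x\<bar> + \<bar>half_term\<bar> / del + \<bar>bdry_term\<bar> / eps"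
    unfolding decomp
    using abs_triangle_ineq[of "G0_term - \<phi> x + half_term / del" "bdry_term / eps"]
      abs_triangle_ineq[of "G0_term - \<phi> x" "half_term / del"]
    by linarith
  also have "\<dots> \<le> (\<epsilon> + 3 * M * (2 powr ((real CARD('n) + 1) / 2) * exp (- \<rho>\<^sup>2 / (8 * (t / eps)))))
      + M * (8 * t * sqrt (t / eps) / c\<^sup>2) / del + C * (32 * t * sqrt (t / eps) / c ^ 3) / eps"
    using G0_bound abs_integral_Hker_half_space_le[OF eps kap del t(1) c0 c M \<phi>_meas]
      abs_integral_Hker_boundary_le[OF eps kap del t(1) c0 c \<psi>_meas C] del eps
    by (intro add_mono divide_right_mono) (simp_all add: half_term_def bdry_term_def)
  also have "\<dots> \<le> \<epsilon> + 3 * M * 2 powr ((real CARD('n) + 1) / 2) * exp (- (\<rho>\<^sup>2 / (8 * T)) * eps)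
      + (8 * M / (del * c\<^sup>2) + 32 * C / c ^ 3 / eps) * (T * sqrt (T / eps))"
  proof -
    have "exp (- \<rho>\<^sup>2 / (8 * (t / eps))) \<le> exp (- (\<rho>\<^sup>2 / (8 * T)) * eps)"
      using t eps by (simp add: frac_le)
    moreover have "t * sqrt (t / eps) \<le> T * sqrt (T / eps)"
      using t eps by (rule mult_sqrt_div_mono)
    ultimately show ?thesis
      using M0 C del eps c0
      by (simp add: field_simps mult_left_mono mult_right_mono divide_right_mono add_mono)
  qed
  finally show ?thesis .
qed

lemma uniform_limitI_dist_le:
  assumes "\<And>e. e > 0 \<Longrightarrow> \<exists>U. (U \<longlongrightarrow> 0) F \<and> (\<forall>\<^sub>F n in F. \<forall>x\<in>S. dist (f n x) (g x) \<le> e + U n)"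
  shows "uniform_limit S f g F"
  unfolding uniform_limit_iff
proof (intro allI impI)
  fix e :: real
  assume "e > 0"
  then obtain U where U: "(U \<longlongrightarrow> 0) F" and bound: "\<forall>\<^sub>F n in F. \<forall>x\<in>S. dist (f n x) (g x) \<le> e / 2 + U n"
    using assms[of "e / 2"] by auto
  have "\<forall>\<^sub>F n in F. U n < e / 2"
    using U \<open>e > 0\<close> by (intro order_tendstoD) auto
  with bound show "\<forall>\<^sub>F n in F. \<forall>x\<in>S. dist (f n x) (g x) < e"
    by eventually_elim fastforce
qed

lemma compact_subset_open_uniform_continuity:
  fixes f :: "'a::euclidean_space \<Rightarrow> 'b::metric_space"
  assumes "compact K" "open U" "K \<subseteq> U" "continuous_on U f" "e > 0"
  obtains d where "d > 0" "\<And>x y. x \<in> K \<Longrightarrow> dist y x < d \<Longrightarrow> y \<in> U \<and> dist (f y) (f x) < e"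
proof -
  obtain r where r: "r > 0" "(\<Union>x\<in>K. cball x r) \<subseteq> U"
    using compact_subset_open_imp_cball_epsilon_subset[OF assms(1-3)] by blast
  define L where "L = {x + z | x z. x \<in> K \<and> z \<in> cball 0 r}"
  have near_L: "y \<in> L" if "x \<in> K" "dist y x \<le> r" for x y
  proof -
    have "y = x + (y - x)" "y - x \<in> cball 0 r"
      using that by (auto simp: dist_norm norm_minus_commute)
    with \<open>x \<in> K\<close> show ?thesis
      unfolding L_def by blast
  qed
  have "L \<subseteq> U"
  proof
    fix w assume "w \<in> L"
    then obtain x z where "w = x + z" "x \<in> K" "norm z \<le> r"
      by (auto simp: L_def)
    then have "w \<in> cball x r"
      by (simp add: dist_norm)
    with \<open>x \<in> K\<close> r(2) show "w \<in> U"
      by blast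
  qed
  moreover have "compact L"
    unfolding L_def by (intro compact_sums assms compact_cball)
  ultimately have "uniformly_continuous_on L f"
    using assms(4) by (intro compact_uniformly_continuous) (auto intro: continuous_on_subset)
  then obtain d where d: "d > 0" "\<And>x y. x \<in> L \<Longrightarrow> y \<in> L \<Longrightarrow> dist y x < d \<Longrightarrow> dist (f y) (f x) < e"
    using \<open>e > 0\<close> unfolding uniformly_continuous_on_def by metis
  show ?thesis
  proof
    show "min r d > 0"
      using r d by simp
    show "y \<in> U \<and> dist (f y) (f x) < e" if "x \<in> K" "dist y x < min r d" for x y
      using that near_L[of x y] near_L[of x x] d(2)[of x y] \<open>L \<subseteq> U\<close> r(1) by auto
  qed
qed

lemma compact_subset_half_space_snd_ge:
  assumes "compact K" "K \<subseteq> half_space"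
  obtains c where "c > 0" "\<And>x. x \<in> K \<Longrightarrow> c \<le> snd x"
proof (cases "K = {}")
  case False
  have "compact (snd ` K)"
    by (intro compact_continuous_image continuous_intros assms(1))
  then obtain m where "m \<in> snd ` K" "\<forall>t\<in>snd ` K. m \<le> t"
    using compact_attains_inf[of "snd ` K"] False by blast
  moreover from this have "m > 0"
    using assms(2) by (auto simp: half_space_def)
  ultimately show ?thesis
    using that by auto
qed (use that[of 1] in simp)

lemma tendsto_exp_plus_sqrt_zero:
  fixes a T K\<^sub>1 K\<^sub>2 K\<^sub>3 :: real
  assumes "a > 0" "T > 0"
  shows "((\<lambda>eps. K\<^sub>1 * exp (- a * eps) + (K\<^sub>2 + K\<^sub>3 / eps) * (T * sqrt (T / eps))) \<longlongrightarrow> 0) at_top"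
  using assms by real_asymp

lemma usol_uniform_limit:
  fixes \<phi> :: "(real^'n) \<times> real \<Rightarrow> real" and \<psi> :: "real^'n \<Rightarrow> real"
  assumes phi_cont: "continuous_on half_space \<phi>" and phi_bdd: "bounded (\<phi> ` half_space)"
    and psi_meas: "\<psi> \<in> borel_measurable lborel" and psi_Linf: "\<exists>C. AE y in lborel. \<bar>\<psi> y\<bar> \<le> C"
    and del: "del > 0" and kap: "kap \<ge> 0"
    and K: "compact K" "K \<subseteq> half_space" and T: "T > 0"
  shows "uniform_limit (K \<times> {0<..<T}) (\<lambda>eps (x, t). usol eps kap del \<phi> \<psi> x t) (\<lambda>(x, t). \<phi> x) at_top"
proof (rule uniform_limitI_dist_le)
  fix e :: real
  assume "e > 0"
  obtain M where M: "\<forall>y\<in>half_space. \<bar>\<phi> y\<bar> \<le> M"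
    using phi_bdd by (auto simp: bounded_iff)
  obtain C0 where C0: "AE y in lborel. \<bar>\<psi> y\<bar> \<le> C0"
    using psi_Linf by blast
  define C where "C = max C0 0"
  have C: "AE y in lborel. \<bar>\<psi> y\<bar> \<le> C" "0 \<le> C"
    using C0 by (auto simp: C_def elim!: eventually_mono)
  obtain c where c: "c > 0" "\<And>x. x \<in> K \<Longrightarrow> c \<le> snd x"
    using compact_subset_half_space_snd_ge[OF K] by blast
  obtain d where d: "d > 0" "\<And>x y. x \<in> K \<Longrightarrow> dist y x < d \<Longrightarrow> dist (\<phi> y) (\<phi> x) < e"
    using compact_subset_open_uniform_continuity[OF K(1) open_half_space K(2) phi_cont \<open>e > 0\<close>] by metis
  define \<rho> where "\<rho> = min c d"
  let ?U = "\<lambda>eps. 3 * M * 2 powr ((real CARD('n) + 1) / 2) * exp (- (\<rho>\<^sup>2 / (8 * T)) * eps)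
      + (8 * M / (del * c\<^sup>2) + 32 * C / c ^ 3 / eps) * (T * sqrt (T / eps))"
  have "\<rho> > 0"
    using c d by (simp add: \<rho>_def)
  then have "(?U \<longlongrightarrow> 0) at_top"
    using T by (intro tendsto_exp_plus_sqrt_zero) simp
  moreover have "\<forall>\<^sub>F eps in at_top. \<forall>(x, t) \<in> K \<times> {0<..<T}.
      dist (usol eps kap del \<phi> \<psi> x t) (\<phi> x) \<le> e + ?U eps"
    using eventually_gt_at_top[of 0]
  proof eventually_elim
    case (elim eps)
    have "dist (usol eps kap del \<phi> \<psi> x t) (\<phi> x) \<le> e + ?U eps" if "x \<in> K" "0 < t" "t < T" for x t
    proof -
      have "\<forall>y\<in>half_space. dist y x < \<rho> \<longrightarrow> \<bar>\<phi> y - \<phi> x\<bar> \<le> e"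
        using d(2)[OF \<open>x \<in> K\<close>] by (auto simp: \<rho>_def dist_real_def less_imp_le)
      then have "\<bar>usol eps kap del \<phi> \<psi> x t - \<phi> x\<bar> \<le> e + ?U eps"
        using abs_usol_minus_le[OF elim kap del \<open>0 < t\<close> _ \<open>\<rho> > 0\<close> _ c(2)[OF \<open>x \<in> K\<close>] M _
            indicator_mult_measurable_of_continuous_on[OF phi_cont half_space_borel] psi_meas C]
          \<open>t < T\<close> by (simp add: \<rho>_def add.assoc)
      then show ?thesis
        by (simp add: dist_real_def)
    qed
    then show ?case
      by auto
  qed
  ultimately show "\<exists>U. (U \<longlongrightarrow> 0) at_top \<and> (\<forall>\<^sub>F eps in at_top. \<forall>xt\<in>K \<times> {0<..<T}.
      dist ((\<lambda>eps (x, t). usol eps kap del \<phi> \<psi> x t) eps xt) ((\<lambda>(x, t). \<phi> x) xt) \<le> e + U eps)"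
    by (intro exI[of _ ?U]) (auto simp: case_prod_beta)
qed

theorem theorem4p4:
  fixes \<phi> :: "(real^'n) \<times> real \<Rightarrow> real" and \<psi> :: "real^'n \<Rightarrow> real"
    and \<delta> k :: real
  assumes phi_cont: "continuous_on half_space \<phi>"
    and phi_bdd: "bounded (\<phi> ` half_space)"
    and psi_meas: "\<psi> \<in> borel_measurable lborel"
    and psi_Linf: "\<exists>C. AE y in lborel. \<bar>\<psi> y\<bar> \<le> C"
    and delta_pos: "\<delta> > 0" and k_pos: "k > 0"
  shows "\<forall>K T. compact K \<and> K \<subseteq> half_space \<and> T > 0 \<longrightarrow>
           uniform_limit (K \<times> {0<..<T}) (\<lambda>eps (x, t). usol eps k \<delta> \<phi> \<psi> x t)
             (\<lambda>(x, t). \<phi> x) at_top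
         \<and> uniform_limit (K \<times> {0<..<T}) (\<lambda>eps (x, t). usol eps 0 \<delta> \<phi> \<psi> x t)
             (\<lambda>(x, t). \<phi> x) at_top"
  using usol_uniform_limit[OF phi_cont phi_bdd psi_meas psi_Linf delta_pos] k_pos by simp

end
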